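(* Fix $q\in[0,1]$, $p\in(0,1)\setminus\{1/2\}$, an integer $k\geq 1$ and a function $f:[0,1]\to[0,1]$, and let $\{S_n\}$ be the elephant random walk with $k$ extractions with replacement described in the context. Define $g(x)=pf(x)+(1-p)\{1-f(x)\}$ for $x\in[0,1]$ and $$H(x)=2^{1-k}\sum_{i=0}^{k} g\!\left(\tfrac{i}{k}\right)\binom{k}{i}(1+x)^{i}(1-x)^{k-i}-1,\qquad x\in[-1,1].$$ Suppose that either (A1) $p>1/2$ and $f(1)<p/(2p-1)$, or (A2) $p<1/2$ and $f(0)<(1-p)/(1-2p)$. If $H$ has a unique fixed point $x^*$ in $[-1,1]$, then $S_n/n\to x^*$ almost surely. In particular, if (A1) or (A2) holds and $H$ satisfies one of: (B1) $H$ is strictly decreasing throughout $(-1,1)$; (B2) $H$ is strictly convex throughout $(-1,1)$ or strictly concave throughout $(-1,1)$; (B3) $H$ is a contraction on $(-1,1)$; then $H$ has a unique fixed point $x^*\in(-1,1)$ and $S_n/n\to x^*$ almost surely.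
   Context: The model: set $X_0=S_0=0$ and let $X_1\in\{\pm1\}$ with $P(X_1=1)=q$. Let $\mathcal{F}_n$ be the $\sigma$-field of all information of the process up to time $n$. For each $n\geq1$, draw $U_{n,1},\dots,U_{n,k}$ i.i.d. uniform on $\{1,\dots,n\}$ (independently of the past), set $C_n^+=\sum_{i=1}^k\chi\{X_{U_{n,i}}=1\}$, and, conditionally on $\mathcal{F}_n$ and the $U_{n,i}$, let $X_{n+1}=1$ with probability $pf(C_n^+/k)+(1-p)\{1-f(C_n^+/k)\}$ and $X_{n+1}=-1$ otherwise. Set $S_n=\sum_{i=1}^n X_i$. The sample size $k$ does not depend on $n$. *)

theory Defs
  imports "HOL-Probability.Probability"
begin

definition erw_g :: "real \<Rightarrow> (real \<Rightarrow> real) \<Rightarrow> real \<Rightarrow> real" where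
  "erw_g p f x = p * f x + (1 - p) * (1 - f x)"

definition erw_H :: "real \<Rightarrow> (real \<Rightarrow> real) \<Rightarrow> nat \<Rightarrow> real \<Rightarrow> real" where
  "erw_H p f k x =
     2 powr (1 - real k) *
       (\<Sum>i = 0..k. erw_g p f (real i / real k) * real (k choose i)
                      * (1 + x) ^ i * (1 - x) ^ (k - i)) - 1"

text \<open>Probability of the next step given the sampled memories: the value y of
  X_{m+1} given that C of the k sampled steps were +1.\<close>
definition erw_step_prob :: "real \<Rightarrow> (real \<Rightarrow> real) \<Rightarrow> nat \<Rightarrow> nat \<Rightarrow> real \<Rightarrow> real" where
  "erw_step_prob p f k C y =
     (if y = 1 then erw_g p f (real C / real k) else 1 - erw_g p f (real C / real k))"

text \<open>X m is the step at time m (m \<ge> 1); U m i (i < k) is the i-th index drawn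
  at time m, uniform on {1..m}.  The law of the process is specified through its
  finite-dimensional distributions: the probability of any admissible history
  (X_1,...,X_n, U_1,...,U_{n-1}) is P(X_1 = x_1) times the product over m of
  (1/m)^k (i.i.d. uniform draws, independent of the past) times the conditional
  probability of X_{m+1} given the past and the draws.\<close>
definition erw_process ::
  "'a measure \<Rightarrow> real \<Rightarrow> real \<Rightarrow> (real \<Rightarrow> real) \<Rightarrow> nat \<Rightarrow>
     (nat \<Rightarrow> 'a \<Rightarrow> real) \<Rightarrow> (nat \<Rightarrow> nat \<Rightarrow> 'a \<Rightarrow> nat) \<Rightarrow> bool" where
  "erw_process M q p f k X U \<longleftrightarrow>
     (\<forall>m. X m \<in> measurable M (count_space UNIV)) \<and>
     (\<forall>m i. U m i \<in> measurable M (count_space UNIV)) \<and>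
     (\<forall>n \<ge> 1. \<forall>x :: nat \<Rightarrow> real. \<forall>u :: nat \<Rightarrow> nat \<Rightarrow> nat.
        (\<forall>m \<in> {1..n}. x m \<in> {-1, 1}) \<longrightarrow>
        (\<forall>m \<in> {1..<n}. \<forall>i < k. u m i \<in> {1..m}) \<longrightarrow>
        measure M {\<omega> \<in> space M. (\<forall>m \<in> {1..n}. X m \<omega> = x m) \<and>
                                 (\<forall>m \<in> {1..<n}. \<forall>i < k. U m i \<omega> = u m i)}
        = (if x 1 = 1 then q else 1 - q) *
          (\<Prod>m \<in> {1..<n}. (1 / real m) ^ k *
              erw_step_prob p f k (card {i. i < k \<and> x (u m i) = 1}) (x (Suc m))))"

definition erw_S :: "(nat \<Rightarrow> 'a \<Rightarrow> real) \<Rightarrow> nat \<Rightarrow> 'a \<Rightarrow> real" where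
  "erw_S X n \<omega> = (\<Sum>i = 1..n. X i \<omega>)"

definition strictly_convex_on :: "real set \<Rightarrow> (real \<Rightarrow> real) \<Rightarrow> bool" where
  "strictly_convex_on S h \<longleftrightarrow>
     (\<forall>x \<in> S. \<forall>y \<in> S. x \<noteq> y \<longrightarrow> (\<forall>t. 0 < t \<and> t < 1 \<longrightarrow>
        h ((1 - t) * x + t * y) < (1 - t) * h x + t * h y))"

definition strictly_concave_on :: "real set \<Rightarrow> (real \<Rightarrow> real) \<Rightarrow> bool" where
  "strictly_concave_on S h \<longleftrightarrow> strictly_convex_on S (\<lambda>x. - h x)"

end

theory Submission
  imports Defs
begin

(*
  Let M_n = \<Sum>_{1 \<le> m < n} (X_{m+1} - H(S_m/m)). Given the past, the number of +1 steps among
  the k draws is binomial with parameter the fraction (1 + S_n/n)/2 of +1 steps so far; hence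
  X_{n+1} = 1 with probability (1 + H(S_n/n))/2, M is a martingale with increments bounded by 2,
  and E[M_n^2] \<le> n - 1. Chebyshev's inequality along n = j^4 with threshold j^3 and the
  Borel-Cantelli lemma give M_n/n \<longrightarrow> 0 almost surely.
  Then z_n = (S_n - M_n)/n obeys the averaging recursion z_{n+1} = z_n + (H(S_n/n) - z_n)/(n+1)
  with S_n/n - z_n \<longrightarrow> 0. As H(-1) > -1 and H(1) < 1, a unique fixed point x* of H is where
  H(w) - w changes sign, so the recursion pushes z_n towards x*; divergence of the harmonic
  series makes it arrive, and hence S_n/n \<longrightarrow> x*. Each of the shape conditions rules out two
  fixed points, and the intermediate value theorem provides one.
*)


lemma erw_g_strict_bounds:
  assumes "0 < p" "p < 1" "f x \<in> {0..1}"
  shows "0 < erw_g p f x" "erw_g p f x < 1"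
proof -
  have f: "0 \<le> f x" "0 \<le> 1 - f x"
    using assms(3) by auto
  have "min p (1 - p) * f x + min p (1 - p) * (1 - f x) \<le> erw_g p f x"
    unfolding erw_g_def using f by (intro add_mono mult_right_mono) auto
  moreover have "erw_g p f x \<le> max p (1 - p) * f x + max p (1 - p) * (1 - f x)"
    unfolding erw_g_def using f by (intro add_mono mult_right_mono) auto
  ultimately show "0 < erw_g p f x" "erw_g p f x < 1"
    using assms(1,2) by (simp_all add: algebra_simps)
qed

lemma erw_H_Bernstein:
  "erw_H p f k (2 * b - 1) = 2 * (\<Sum>j\<le>k. erw_g p f (real j / real k) * Bernstein k j b) - 1"
proof -
  have "2 powr (1 - real k) * ((1 + (2 * b - 1)) ^ j * (1 - (2 * b - 1)) ^ (k - j))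
      = 2 * (b ^ j * (1 - b) ^ (k - j))" if "j \<le> k" for j
  proof -
    have "(2::real) ^ j * 2 ^ (k - j) = 2 ^ k"
      using that by (simp flip: power_add)
    moreover have "2 powr (1 - real k) = 2 / 2 ^ k"
      by (simp add: powr_diff powr_realpow)
    moreover have "1 + (2 * b - 1) = 2 * b" "1 - (2 * b - 1) = 2 * (1 - b)"
      by simp_all
    ultimately show ?thesis
      by (simp only: power_mult_distrib) (simp add: field_simps)
  qed
  then have "2 powr (1 - real k) * (erw_g p f (real j / real k) * real (k choose j)
        * (1 + (2 * b - 1)) ^ j * (1 - (2 * b - 1)) ^ (k - j))
      = 2 * (erw_g p f (real j / real k) * Bernstein k j b)" if "j \<in> {..k}" for j
  proof -
    have "2 powr (1 - real k) * (erw_g p f (real j / real k) * real (k choose j)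
        * (1 + (2 * b - 1)) ^ j * (1 - (2 * b - 1)) ^ (k - j))
      = erw_g p f (real j / real k) * real (k choose j)
        * (2 powr (1 - real k) * ((1 + (2 * b - 1)) ^ j * (1 - (2 * b - 1)) ^ (k - j)))"
      by (simp only: mult_ac)
    also have "\<dots> = erw_g p f (real j / real k) * real (k choose j) * (2 * (b ^ j * (1 - b) ^ (k - j)))"
      using that \<open>j \<le> k \<Longrightarrow> _\<close> by simp
    also have "\<dots> = 2 * (erw_g p f (real j / real k) * Bernstein k j b)"
      by (simp only: Bernstein_def mult_ac)
    finally show ?thesis .
  qed
  then show ?thesis
    unfolding erw_H_def atLeast0AtMost sum_distrib_left
    by (intro arg_cong[where f = "\<lambda>t. t - 1"] sum.cong refl)
qed

lemma continuous_on_erw_H: "continuous_on A (erw_H p f k)"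
  unfolding erw_H_def by (intro continuous_intros)

lemma weighted_average_strict_bounds:
  fixes c w :: "'i \<Rightarrow> real"
  assumes "finite A" "\<forall>j\<in>A. 0 \<le> w j" "sum w A = 1" "\<forall>j\<in>A. a < c j \<and> c j < b"
  shows "a < (\<Sum>j\<in>A. c j * w j)" "(\<Sum>j\<in>A. c j * w j) < b"
proof -
  obtain j0 where "j0 \<in> A" "w j0 \<noteq> 0"
    using sum.not_neutral_contains_not_neutral[of w A] assms(3) by auto
  then have "0 < w j0"
    using assms(2) by force
  have "0 < (\<Sum>j\<in>A. (c j - a) * w j)" "0 < (\<Sum>j\<in>A. (b - c j) * w j)"
    using \<open>j0 \<in> A\<close> \<open>0 < w j0\<close> assms(1,2,4) by (auto intro!: sum_pos2[of A j0])
  moreover have "(\<Sum>j\<in>A. (c j - a) * w j) = (\<Sum>j\<in>A. c j * w j) - a"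
    "(\<Sum>j\<in>A. (b - c j) * w j) = b - (\<Sum>j\<in>A. c j * w j)"
    using assms(3) by (simp_all add: left_diff_distrib sum_subtractf flip: sum_distrib_left)
  ultimately show "a < (\<Sum>j\<in>A. c j * w j)" "(\<Sum>j\<in>A. c j * w j) < b"
    by simp_all
qed

section \<open>Fixed points of self-maps of [-1, 1]\<close>

lemma fixed_point_exists:
  fixes h :: "real \<Rightarrow> real"
  assumes "continuous_on {-1..1} h" "h 1 \<le> 1" "-1 \<le> h (-1)"
  shows "\<exists>x\<in>{-1..1}. h x = x"
proof -
  have "continuous_on {-1..1} (\<lambda>w. h w - w)"
    using assms(1) by (intro continuous_intros)
  then obtain x where "-1 \<le> x" "x \<le> 1" "h x - x = 0"
    using IVT2'[of "\<lambda>w. h w - w" 1 0 "-1"] assms(2,3) by auto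
  then show ?thesis
    by auto
qed

lemma less_self_above_unique_fixed_point:
  fixes h :: "real \<Rightarrow> real"
  assumes cont: "continuous_on {-1..1} h" and "h 1 < 1"
    and unique: "\<forall>w\<in>{-1..1}. h w = w \<longrightarrow> w = x"
    and w: "w \<in> {-1..1}" "x < w"
  shows "h w < w"
proof (rule ccontr)
  assume "\<not> h w < w"
  moreover have "continuous_on {w..1} (\<lambda>v. h v - v)"
    using w by (intro continuous_intros continuous_on_subset[OF cont]) auto
  ultimately obtain c where "w \<le> c" "c \<le> 1" "h c - c = 0"
    using IVT2'[of "\<lambda>v. h v - v" 1 0 w] w \<open>h 1 < 1\<close> by auto
  then have "c = x"
    using unique w by auto
  then show False
    using \<open>w \<le> c\<close> w by simp
qed

lemma greater_self_below_unique_fixed_point: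
  fixes h :: "real \<Rightarrow> real"
  assumes cont: "continuous_on {-1..1} h" and "-1 < h (-1)"
    and unique: "\<forall>w\<in>{-1..1}. h w = w \<longrightarrow> w = x"
    and w: "w \<in> {-1..1}" "w < x"
  shows "w < h w"
proof -
  have "continuous_on {-1..1} (\<lambda>v. - h (- v))"
    using cont by (intro continuous_intros continuous_on_compose2[OF cont]) auto
  moreover have "\<forall>v\<in>{-1..1}. - h (- v) = v \<longrightarrow> v = - x"
  proof (intro ballI impI)
    fix v :: real
    assume "v \<in> {-1..1}" "- h (- v) = v"
    then have "- v \<in> {-1..1}" "h (- v) = - v"
      by auto
    then show "v = - x"
      using unique by force
  qed
  ultimately have "- h (- (- w)) < - w"
    using less_self_above_unique_fixed_point[of "\<lambda>v. - h (- v)" "- x" "- w"] assms(2) w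
    by auto
  then show ?thesis
    by simp
qed

lemma strictly_convex_on_three_points:
  assumes "strictly_convex_on S \<phi>" "a \<in> S" "c \<in> S" "a < b" "b < c"
  shows "(c - a) * \<phi> b < (c - b) * \<phi> a + (b - a) * \<phi> c"
proof -
  define t where "t = (b - a) / (c - a)"
  have t: "0 < t" "t < 1"
    using assms(4,5) by (auto simp: t_def field_simps)
  have ta: "t * (c - a) = b - a"
    using assms(4,5) by (simp add: t_def)
  then have "(1 - t) * a + t * c = b"
    by (simp add: algebra_simps)
  moreover have "\<phi> ((1 - t) * a + t * c) < (1 - t) * \<phi> a + t * \<phi> c"
    using assms(1-5) t unfolding strictly_convex_on_def by auto
  ultimately have "\<phi> b < (1 - t) * \<phi> a + t * \<phi> c"
    by simp
  then have "(c - a) * \<phi> b < (c - a) * ((1 - t) * \<phi> a + t * \<phi> c)"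
    using assms(4,5) by (intro mult_strict_left_mono) auto
  also have "\<dots> = ((c - a) - t * (c - a)) * \<phi> a + t * (c - a) * \<phi> c"
    by (simp add: algebra_simps)
  also have "\<dots> = (c - b) * \<phi> a + (b - a) * \<phi> c"
    unfolding ta by simp
  finally show ?thesis .
qed

lemma strictly_convex_on_add_linear:
  assumes "strictly_convex_on S h"
  shows "strictly_convex_on S (\<lambda>x. h x + c * x)"
  unfolding strictly_convex_on_def
proof (intro ballI impI allI)
  fix x y t :: real
  assume "x \<in> S" "y \<in> S" "x \<noteq> y" "0 < t \<and> t < 1"
  then have "h ((1 - t) * x + t * y) < (1 - t) * h x + t * h y"
    using assms unfolding strictly_convex_on_def by blast
  moreover have "(1 - t) * (h x + c * x) + t * (h y + c * y)
      = (1 - t) * h x + t * h y + c * ((1 - t) * x + t * y)"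
    by (simp add: algebra_simps)
  ultimately show "h ((1 - t) * x + t * y) + c * ((1 - t) * x + t * y)
      < (1 - t) * (h x + c * x) + t * (h y + c * y)"
    by linarith
qed

lemma no_two_fixed_points_strictly_convex:
  fixes h :: "real \<Rightarrow> real"
  assumes cont: "continuous_on {-1..1} h" and "h 1 < 1"
    and convex: "strictly_convex_on {-1<..<1} h"
    and ab: "a \<in> {-1<..<1}" "b \<in> {-1<..<1}" "a < b" and fixed: "h a = a" "h b = b"
  shows False
proof -
  have convex': "strictly_convex_on {-1<..<1} (\<lambda>x. h x + (-1) * x)"
    using convex by (rule strictly_convex_on_add_linear)
  have "0 < h d - d" if "d \<in> {b<..<1}" for d
    using strictly_convex_on_three_points[OF convex', of a d b] ab fixed that
    by (auto simp: zero_less_mult_iff)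
  moreover have "((\<lambda>d. h d - d) \<longlongrightarrow> h 1 - 1) (at_left 1)"
    using cont by (intro continuous_on_Icc_at_leftD continuous_intros) auto
  ultimately have "0 \<le> h 1 - 1"
    using ab eventually_at_left_real[of b 1]
    by (intro tendsto_lowerbound[of "\<lambda>d. h d - d" _ "at_left 1"])
       (auto elim!: eventually_mono intro: less_imp_le)
  then show False
    using \<open>h 1 < 1\<close> by simp
qed

lemma no_two_fixed_points_strictly_concave:
  fixes h :: "real \<Rightarrow> real"
  assumes cont: "continuous_on {-1..1} h" and "-1 < h (-1)"
    and concave: "strictly_concave_on {-1<..<1} h"
    and ab: "a \<in> {-1<..<1}" "b \<in> {-1<..<1}" "a < b" and fixed: "h a = a" "h b = b"
  shows False
proof -
  have convex: "strictly_convex_on {-1<..<1} (\<lambda>x. - h x + 1 * x)"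
    using concave unfolding strictly_concave_on_def by (rule strictly_convex_on_add_linear)
  have "0 < d - h d" if "d \<in> {-1<..<a}" for d
    using strictly_convex_on_three_points[OF convex, of d b a] ab fixed that
    by (auto simp: zero_less_mult_iff)
  moreover have "((\<lambda>d. d - h d) \<longlongrightarrow> -1 - h (-1)) (at_right (-1))"
    using cont by (intro continuous_on_Icc_at_rightD continuous_intros) auto
  ultimately have "0 \<le> -1 - h (-1)"
    using ab eventually_at_right_real[of "-1" a]
    by (intro tendsto_lowerbound[of "\<lambda>d. d - h d" _ "at_right (-1)"])
       (auto elim!: eventually_mono intro: less_imp_le)
  then show False
    using \<open>-1 < h (-1)\<close> by simp
qed

lemma no_two_fixed_points:
  fixes h :: "real \<Rightarrow> real"
  assumes cont: "continuous_on {-1..1} h" and "h 1 < 1" "-1 < h (-1)"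
    and shape: "(\<forall>x\<in>{-1<..<1}. \<forall>y\<in>{-1<..<1}. x < y \<longrightarrow> h y < h x)
        \<or> strictly_convex_on {-1<..<1} h \<or> strictly_concave_on {-1<..<1} h
        \<or> (\<exists>c. 0 \<le> c \<and> c < 1 \<and> (\<forall>x\<in>{-1<..<1}. \<forall>y\<in>{-1<..<1}. \<bar>h x - h y\<bar> \<le> c * \<bar>x - y\<bar>))"
    and "a \<in> {-1..1}" "b \<in> {-1..1}" "a < b" and fixed: "h a = a" "h b = b"
  shows False
proof -
  have "a \<noteq> -1" "b \<noteq> 1"
    using fixed assms(2,3) by auto
  then have ab: "a \<in> {-1<..<1}" "b \<in> {-1<..<1}" "a < b"
    using assms(5-7) by auto
  show False
    using shape
  proof (elim disjE)
    assume "\<forall>x\<in>{-1<..<1}. \<forall>y\<in>{-1<..<1}. x < y \<longrightarrow> h y < h x"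
    then have "h b < h a"
      using ab by blast
    then show False
      using fixed ab by simp
  next
    assume "strictly_convex_on {-1<..<1} h"
    then show False
      using no_two_fixed_points_strictly_convex[OF cont assms(2) _ ab fixed] by blast
  next
    assume "strictly_concave_on {-1<..<1} h"
    then show False
      using no_two_fixed_points_strictly_concave[OF cont assms(3) _ ab fixed] by blast
  next
    assume "\<exists>c. 0 \<le> c \<and> c < 1 \<and> (\<forall>x\<in>{-1<..<1}. \<forall>y\<in>{-1<..<1}. \<bar>h x - h y\<bar> \<le> c * \<bar>x - y\<bar>)"
    then obtain c where "c < 1" and "\<bar>h b - h a\<bar> \<le> c * \<bar>b - a\<bar>"
      using ab by blast
    moreover have "c * \<bar>b - a\<bar> < 1 * \<bar>b - a\<bar>"
      using \<open>c < 1\<close> ab(3) by (intro mult_strict_right_mono) auto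
    ultimately show False
      using fixed by simp
  qed
qed

lemma unique_fixed_point:
  fixes h :: "real \<Rightarrow> real"
  assumes cont: "continuous_on {-1..1} h" and "h 1 < 1" "-1 < h (-1)"
    and shape: "(\<forall>x\<in>{-1<..<1}. \<forall>y\<in>{-1<..<1}. x < y \<longrightarrow> h y < h x)
        \<or> strictly_convex_on {-1<..<1} h \<or> strictly_concave_on {-1<..<1} h
        \<or> (\<exists>c. 0 \<le> c \<and> c < 1 \<and> (\<forall>x\<in>{-1<..<1}. \<forall>y\<in>{-1<..<1}. \<bar>h x - h y\<bar> \<le> c * \<bar>x - y\<bar>))"
  shows "\<exists>x\<in>{-1<..<1}. h x = x \<and> (\<forall>y\<in>{-1..1}. h y = y \<longrightarrow> y = x)"
proof -
  obtain x where x: "x \<in> {-1..1}" "h x = x"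
    using fixed_point_exists[OF cont less_imp_le[OF assms(2)] less_imp_le[OF assms(3)]] by blast
  have "x \<noteq> -1" "x \<noteq> 1"
    using x(2) assms(2,3) by auto
  then have "x \<in> {-1<..<1}"
    using x(1) by auto
  moreover have "y = x" if y: "y \<in> {-1..1}" "h y = y" for y
  proof (cases y x rule: linorder_cases)
    case less
    then show ?thesis
      using no_two_fixed_points[OF assms y(1) x(1) _ y(2) x(2)] by blast
  next
    case greater
    then show ?thesis
      using no_two_fixed_points[OF assms x(1) y(1) _ x(2) y(2)] by blast
  qed
  ultimately show ?thesis
    using x(2) by blast
qed

section \<open>A deterministic averaging recursion\<close>

lemma harmonic_descent_reaches_level:
  fixes a d :: "nat \<Rightarrow> real"
  assumes "0 < c"
    and step: "\<And>n. N \<le> n \<Longrightarrow> a (Suc n) = a n + d n / Suc n \<and> B \<le> a n \<and> (L < a n \<longrightarrow> d n \<le> - c)"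
  shows "\<exists>n\<ge>N. a n \<le> L"
proof (rule ccontr)
  assume "\<not> ?thesis"
  then have above: "L < a n" if "N \<le> n" for n
    using that not_le by blast
  have descent: "a n \<le> a N - c * (harm n - harm N)" if "N \<le> n" for n
    using that
  proof (induction n rule: dec_induct)
    case (step n)
    then have "d n \<le> - c"
      using above assms(2) by blast
    then have "d n / Suc n \<le> - c / Suc n"
      by (intro divide_right_mono) auto
    then have "a (Suc n) \<le> a n - c / Suc n"
      using assms(2)[OF step(1)] minus_divide_left[of c "Suc n"] by linarith
    with step.IH show ?case
      by (simp add: harm_Suc inverse_eq_divide algebra_simps)
  qed simp
  have "eventually (\<lambda>n. harm N + (a N - B + 1) / c \<le> harm n) sequentially"
    using harm_at_top by (simp add: filterlim_at_top)
  then obtain N' where "\<forall>n\<ge>N'. harm N + (a N - B + 1) / c \<le> harm n"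
    by (auto simp: eventually_sequentially)
  then obtain n where n: "N \<le> n" "harm N + (a N - B + 1) / c \<le> harm n"
    by (meson max.cobounded1 max.cobounded2)
  then have "a N - B + 1 \<le> c * (harm n - harm N)"
    using \<open>0 < c\<close> by (simp add: field_simps)
  then show False
    using descent[OF n(1)] step[OF n(1)] by linarith
qed

lemma eventually_le_of_harmonic_descent:
  fixes a d :: "nat \<Rightarrow> real"
  assumes "0 < c" "0 < \<eta>"
    and "eventually (\<lambda>n. a (Suc n) = a n + d n / Suc n \<and> B \<le> a n \<and> d n \<le> D
                        \<and> (L < a n \<longrightarrow> d n \<le> - c)) sequentially"
  shows "eventually (\<lambda>n. a n \<le> L + \<eta>) sequentially"
proof -
  have "eventually (\<lambda>n. D / real (Suc n) < \<eta>) sequentially"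
    using LIMSEQ_Suc[OF lim_const_over_n[of D]] \<open>0 < \<eta>\<close> by (intro order_tendstoD(2)) auto
  with assms(3) have "eventually (\<lambda>n. (a (Suc n) = a n + d n / Suc n \<and> B \<le> a n \<and> d n \<le> D
      \<and> (L < a n \<longrightarrow> d n \<le> - c)) \<and> D / Suc n < \<eta>) sequentially"
    by (rule eventually_conj)
  then obtain N where N: "\<And>n. N \<le> n \<Longrightarrow> (a (Suc n) = a n + d n / Suc n \<and> B \<le> a n
      \<and> d n \<le> D \<and> (L < a n \<longrightarrow> d n \<le> - c)) \<and> D / Suc n < \<eta>"
    unfolding eventually_sequentially by blast
  have "\<exists>n\<ge>N. a n \<le> L"
    by (rule harmonic_descent_reaches_level[OF \<open>0 < c\<close>]) (use N in blast)
  then obtain n0 where n0: "N \<le> n0" "a n0 \<le> L"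
    by blast
  have "a n \<le> L + \<eta>" if "n0 \<le> n" for n
    using that
  proof (induction n rule: dec_induct)
    case base
    then show ?case
      using n0 \<open>0 < \<eta>\<close> by simp
  next
    case (step n)
    then have n: "a (Suc n) = a n + d n / Suc n" "d n \<le> D" "L < a n \<longrightarrow> d n \<le> - c" "D / Suc n < \<eta>"
      using N[of n] n0 by auto
    show ?case
    proof (cases "L < a n")
      case True
      then have "d n / Suc n \<le> 0"
        using n(3) \<open>0 < c\<close> by (simp add: divide_nonpos_pos)
      then show ?thesis
        using n(1) step.IH by linarith
    next
      case False
      have "d n / Suc n \<le> D / Suc n"
        using n(2) by (intro divide_right_mono) auto
      then show ?thesis
        using False n(1,4) by linarith
    qed
  qed
  then show ?thesis
    by (auto simp: eventually_sequentially)
qed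

lemma uniform_gap_above:
  fixes h :: "real \<Rightarrow> real"
  assumes cont: "continuous_on {-1..1} h" and below: "\<forall>w\<in>{-1..1}. x < w \<longrightarrow> h w < w"
    and "0 < c"
  shows "\<exists>\<delta>>0. \<forall>w\<in>{-1..1}. x + c \<le> w \<longrightarrow> h w - w \<le> - \<delta>"
proof (cases "{max (-1) (x + c)..1} = {}")
  case True
  then show ?thesis
    by (intro exI[of _ 1]) auto
next
  case False
  have "continuous_on {max (-1) (x + c)..1} (\<lambda>w. h w - w)"
    by (intro continuous_intros continuous_on_subset[OF cont]) auto
  then obtain w0 where w0: "w0 \<in> {max (-1) (x + c)..1}"
    and max: "\<forall>w\<in>{max (-1) (x + c)..1}. h w - w \<le> h w0 - w0"
    using continuous_attains_sup[OF compact_Icc False] by blast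
  have "h w0 < w0"
    using below w0 \<open>0 < c\<close> by auto
  then show ?thesis
    using max by (intro exI[of _ "w0 - h w0"]) auto
qed

lemma drift_below_gap:
  fixes h :: "real \<Rightarrow> real"
  assumes gap: "\<forall>w\<in>{-1..1}. x + e / 4 \<le> w \<longrightarrow> h w - w \<le> - \<delta>" and "y \<in> {-1..1}"
    and "\<bar>y - z\<bar> < e / 4" "\<bar>y - z\<bar> < \<delta> / 2" "x + e / 2 < z"
  shows "h y - z \<le> - (\<delta> / 2)"
proof -
  have "x + e / 4 \<le> y"
    using assms(3,5) unfolding abs_less_iff by linarith
  then have "h y - y \<le> - \<delta>"
    using gap assms(2) by blast
  then show ?thesis
    using assms(4) unfolding abs_less_iff by linarith
qed

lemma averaging_eventually_le:
  fixes h :: "real \<Rightarrow> real" and y z :: "nat \<Rightarrow> real"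
  assumes cont: "continuous_on {-1..1} h" and range: "\<forall>w\<in>{-1..1}. \<bar>h w\<bar> \<le> 1"
    and below: "\<forall>w\<in>{-1..1}. x < w \<longrightarrow> h w < w"
    and y: "\<forall>n\<ge>1. y n \<in> {-1..1}"
    and z: "\<forall>n\<ge>1. z (Suc n) = z n + (h (y n) - z n) / Suc n"
    and close: "(\<lambda>n. y n - z n) \<longlonglongrightarrow> 0" and "0 < e"
  shows "eventually (\<lambda>n. y n \<le> x + e) sequentially"
proof -
  obtain \<delta> where "0 < \<delta>" and gap: "\<forall>w\<in>{-1..1}. x + e / 4 \<le> w \<longrightarrow> h w - w \<le> - \<delta>"
    using uniform_gap_above[OF cont below, of "e / 4"] \<open>0 < e\<close> by auto
  have "0 < min (min (e / 4) (\<delta> / 2)) 1"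
    using \<open>0 < e\<close> \<open>0 < \<delta>\<close> by simp
  from tendstoD[OF close this]
  have ev: "eventually (\<lambda>n. 1 \<le> n \<and> \<bar>y n - z n\<bar> < e / 4 \<and> \<bar>y n - z n\<bar> < \<delta> / 2 \<and> \<bar>y n - z n\<bar> < 1)
      sequentially"
    using eventually_ge_at_top[of 1] by eventually_elim (simp add: dist_real_def)
  then have "eventually (\<lambda>n. z (Suc n) = z n + (h (y n) - z n) / Suc n \<and> -2 \<le> z n
      \<and> h (y n) - z n \<le> 3 \<and> (x + e / 2 < z n \<longrightarrow> h (y n) - z n \<le> - (\<delta> / 2))) sequentially"
  proof eventually_elim
    case (elim n)
    then have yn: "y n \<in> {-1..1}" "\<bar>h (y n)\<bar> \<le> 1"
      using y range by auto
    have "h (y n) - z n \<le> - (\<delta> / 2)" if "x + e / 2 < z n"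
      using drift_below_gap[OF gap yn(1)] elim that by blast
    moreover have "-2 \<le> z n" "h (y n) - z n \<le> 3"
      using elim yn unfolding abs_less_iff abs_le_iff atLeastAtMost_iff by linarith+
    moreover have "z (Suc n) = z n + (h (y n) - z n) / Suc n"
      using z elim by blast
    ultimately show ?case
      by blast
  qed
  then have "eventually (\<lambda>n. z n \<le> x + e / 2 + e / 4) sequentially"
    using \<open>0 < \<delta>\<close> \<open>0 < e\<close> by (intro eventually_le_of_harmonic_descent[of "\<delta> / 2"]) auto
  then show ?thesis
    using ev
  proof eventually_elim
    case (elim n)
    then show ?case
      unfolding abs_less_iff by linarith
  qed
qed

lemma averaging_tendsto:
  fixes h :: "real \<Rightarrow> real" and y z :: "nat \<Rightarrow> real"
  assumes cont: "continuous_on {-1..1} h" and range: "\<forall>w\<in>{-1..1}. \<bar>h w\<bar> \<le> 1"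
    and below: "\<forall>w\<in>{-1..1}. x < w \<longrightarrow> h w < w"
    and above: "\<forall>w\<in>{-1..1}. w < x \<longrightarrow> w < h w"
    and y: "\<forall>n\<ge>1. y n \<in> {-1..1}"
    and z: "\<forall>n\<ge>1. z (Suc n) = z n + (h (y n) - z n) / Suc n"
    and close: "(\<lambda>n. y n - z n) \<longlonglongrightarrow> 0"
  shows "y \<longlonglongrightarrow> x"
proof (rule tendstoI)
  fix e :: real
  assume "0 < e"
  have "eventually (\<lambda>n. y n \<le> x + e / 2) sequentially"
    using averaging_eventually_le[OF assms(1-3,5-7)] \<open>0 < e\<close> by simp
  moreover have "eventually (\<lambda>n. - y n \<le> - x + e / 2) sequentially"
  proof (rule averaging_eventually_le[of "\<lambda>w. - h (- w)"])
    show "continuous_on {-1..1} (\<lambda>w. - h (- w))"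
      by (intro continuous_intros continuous_on_compose2[OF cont]) auto
    show "\<forall>w\<in>{-1..1}. - x < w \<longrightarrow> - h (- w) < w"
      using above by (metis atLeastAtMost_iff minus_le_iff minus_less_iff neg_le_iff_le)
    show "\<forall>n\<ge>1. - z (Suc n) = - z n + (- h (- (- y n)) - - z n) / Suc n"
      using z by (simp add: field_simps)
    show "(\<lambda>n. - y n - - z n) \<longlonglongrightarrow> 0"
      using tendsto_minus[OF close] by simp
  qed (use range y \<open>0 < e\<close> in auto)
  ultimately show "eventually (\<lambda>n. dist (y n) x < e) sequentially"
  proof eventually_elim
    case (elim n)
    then show ?case
      using \<open>0 < e\<close> by (auto simp: dist_real_def abs_less_iff)
  qed
qed

lemma nat_between_fourth_powers:
  assumes "1 \<le> n"
  shows "\<exists>j. Suc j ^ 4 \<le> n \<and> n < Suc (Suc j) ^ 4"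
  using assms
proof (induction n rule: nat_induct_at_least)
  case base
  then show ?case
    by (intro exI[of _ 0]) (simp add: eval_nat_numeral)
next
  case (Suc n)
  then obtain j where j: "Suc j ^ 4 \<le> n" "n < Suc (Suc j) ^ 4"
    by blast
  show ?case
  proof (cases "Suc n = Suc (Suc j) ^ 4")
    case True
    have "Suc (Suc j) ^ 4 < Suc (Suc (Suc j)) ^ 4"
      by (intro power_strict_mono) auto
    then show ?thesis
      using True by (intro exI[of _ "Suc j"]) auto
  next
    case False
    then show ?thesis
      using j by (intro exI[of _ j]) auto
  qed
qed

lemma abs_diff_le_of_bounded_increments:
  fixes a :: "nat \<Rightarrow> real"
  assumes increments: "\<forall>n\<ge>1. \<bar>a (Suc n) - a n\<bar> \<le> C" and "1 \<le> m" "m \<le> n"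
  shows "\<bar>a n - a m\<bar> \<le> C * (real n - real m)"
  using assms(3)
proof (induction n rule: dec_induct)
  case (step n)
  have "\<bar>a (Suc n) - a n\<bar> \<le> C"
    using increments step.hyps(1) assms(2) by simp
  moreover have "C * (real (Suc n) - real m) = C * (real n - real m) + C"
    by (simp add: algebra_simps)
  ultimately show ?case
    using step.IH unfolding abs_le_iff by linarith
qed simp

lemma abs_div_le_between_fourth_powers:
  fixes a :: "nat \<Rightarrow> real"
  assumes increments: "\<forall>n\<ge>1. \<bar>a (Suc n) - a n\<bar> \<le> C"
    and sparse: "\<bar>a (Suc j ^ 4)\<bar> \<le> real (Suc j ^ 3)"
    and n: "Suc j ^ 4 \<le> n" "n < Suc (Suc j) ^ 4"
  shows "\<bar>a n\<bar> / real n \<le> (1 + 15 * C) / real (Suc j)"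
proof -
  define A where "A = real (Suc j)"
  have "1 \<le> A" "0 \<le> C"
    using increments[rule_format, of 1] by (auto simp: A_def)
  have "real (Suc j ^ 4) \<le> real n" "real n < real (Suc (Suc j) ^ 4)"
    using n by (simp_all only: of_nat_le_iff of_nat_less_iff)
  then have nA: "A ^ 4 \<le> real n" "real n < (A + 1) ^ 4"
    by (simp_all add: A_def)
  have "A ^ 1 \<le> A ^ 3" "A ^ 2 \<le> A ^ 3" "1 \<le> A ^ 3"
    using \<open>1 \<le> A\<close> by (simp_all only: power_increasing one_le_power)
  moreover have "(A + 1) ^ 4 - A ^ 4 = 4 * A ^ 3 + 6 * A ^ 2 + 4 * A ^ 1 + 1"
    by algebra
  ultimately have "real n - A ^ 4 \<le> 15 * A ^ 3"
    using nA by linarith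
  have "\<bar>a n\<bar> \<le> \<bar>a (Suc j ^ 4)\<bar> + C * (real n - A ^ 4)"
    using abs_diff_le_of_bounded_increments[OF increments _ n(1)] by (simp add: A_def)
  also have "\<dots> \<le> A ^ 3 + C * (15 * A ^ 3)"
    using sparse \<open>real n - A ^ 4 \<le> 15 * A ^ 3\<close> \<open>0 \<le> C\<close>
    by (intro add_mono mult_left_mono) (simp_all add: A_def)
  also have "\<dots> = (1 + 15 * C) * A ^ 3"
    by (simp add: algebra_simps)
  finally have "\<bar>a n\<bar> / real n \<le> (1 + 15 * C) * A ^ 3 / A ^ 4"
    using nA \<open>1 \<le> A\<close> \<open>0 \<le> C\<close> by (intro frac_le) simp_all
  also have "\<dots> = (1 + 15 * C) / A"
    using \<open>1 \<le> A\<close> by (simp add: power_eq_if)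
  finally show ?thesis
    by (simp add: A_def)
qed

lemma LIMSEQ_div_of_sparse_fourth_power_bound:
  fixes a :: "nat \<Rightarrow> real"
  assumes increments: "\<forall>n\<ge>1. \<bar>a (Suc n) - a n\<bar> \<le> C"
    and sparse: "eventually (\<lambda>j. \<bar>a (Suc j ^ 4)\<bar> \<le> real (Suc j ^ 3)) sequentially"
  shows "(\<lambda>n. a n / n) \<longlonglongrightarrow> 0"
proof (rule LIMSEQ_I)
  fix r :: real
  assume "0 < r"
  have "(\<lambda>j. (1 + 15 * C) / real (Suc j)) \<longlonglongrightarrow> 0"
    using LIMSEQ_Suc[OF lim_const_over_n[of "1 + 15 * C"]] by simp
  then have "eventually (\<lambda>j. \<bar>a (Suc j ^ 4)\<bar> \<le> real (Suc j ^ 3) \<and> (1 + 15 * C) / real (Suc j) < r)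
      sequentially"
    using sparse \<open>0 < r\<close> by (auto intro: eventually_conj order_tendstoD(2))
  then obtain J where J: "\<And>j. J \<le> j \<Longrightarrow> \<bar>a (Suc j ^ 4)\<bar> \<le> real (Suc j ^ 3)
      \<and> (1 + 15 * C) / real (Suc j) < r"
    by (auto simp: eventually_sequentially)
  show "\<exists>N. \<forall>n\<ge>N. norm (a n / real n - 0) < r"
  proof (intro exI allI impI)
    fix n
    assume n: "Suc J ^ 4 \<le> n"
    moreover have "0 < Suc J ^ 4"
      by simp
    ultimately have "1 \<le> n"
      by linarith
    then obtain j where j: "Suc j ^ 4 \<le> n" "n < Suc (Suc j) ^ 4"
      using nat_between_fourth_powers by blast
    have "J \<le> j"
    proof (rule ccontr)
      assume "\<not> J \<le> j"
      then have "Suc (Suc j) ^ 4 \<le> Suc J ^ 4"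
        by (intro power_mono) auto
      then show False
        using j n by linarith
    qed
    then have "\<bar>a n\<bar> / real n < r"
      using abs_div_le_between_fourth_powers[OF increments _ j] J by fastforce
    then show "norm (a n / real n - 0) < r"
      by simp
  qed
qed

section \<open>Uniform draws with replacement\<close>

lemma sum_PiE_insert:
  assumes "a \<notin> I"
  shows "(\<Sum>g\<in>Pi\<^sub>E (insert a I) T. F g) = (\<Sum>y\<in>T a. \<Sum>g\<in>Pi\<^sub>E I T. F (g(a := y)))"
proof -
  have "(\<Sum>g\<in>Pi\<^sub>E (insert a I) T. F g) = (\<Sum>(y, g)\<in>T a \<times> Pi\<^sub>E I T. F (g(a := y)))"
    using assms
    by (intro sum.reindex_bij_witness[of _ "\<lambda>(y, g). g(a := y)" "\<lambda>g. (g a, g(a := undefined))"])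
       (auto simp: PiE_def extensional_def)
  then show ?thesis
    by (simp add: sum.cartesian_product)
qed

lemma binomial_sum_Suc:
  fixes b c :: real
  shows "(\<Sum>j\<le>k. real (k choose j) * b ^ j * c ^ (k - j) * (b * G (Suc j) + c * G j))
       = (\<Sum>j\<le>Suc k. real (Suc k choose j) * b ^ j * c ^ (Suc k - j) * G j)"
proof -
  have "(\<Sum>j\<le>Suc k. real (Suc k choose j) * b ^ j * c ^ (Suc k - j) * G j)
     = c ^ Suc k * G 0 + (\<Sum>j\<le>k. real (k choose j) * b ^ Suc j * c ^ (k - j) * G (Suc j))
         + (\<Sum>j\<le>k. real (k choose Suc j) * b ^ Suc j * c ^ (k - j) * G (Suc j))"
    by (subst sum.atMost_Suc_shift) (simp add: sum.distrib algebra_simps)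
  moreover have "(\<Sum>j\<le>Suc k. real (k choose j) * b ^ j * c ^ (Suc k - j) * G j)
     = c ^ Suc k * G 0 + (\<Sum>j\<le>k. real (k choose Suc j) * b ^ Suc j * c ^ (k - j) * G (Suc j))"
    by (subst sum.atMost_Suc_shift) simp
  moreover have "(\<Sum>j\<le>Suc k. real (k choose j) * b ^ j * c ^ (Suc k - j) * G j)
     = (\<Sum>j\<le>k. real (k choose j) * b ^ j * c ^ (Suc k - j) * G j)"
    by simp
  moreover have "(\<Sum>j\<le>k. real (k choose j) * b ^ j * c ^ (k - j) * (b * G (Suc j) + c * G j))
     = (\<Sum>j\<le>k. real (k choose j) * b ^ Suc j * c ^ (k - j) * G (Suc j))
       + (\<Sum>j\<le>k. real (k choose j) * b ^ j * c ^ (Suc k - j) * G j)"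
    by (auto simp: sum.distrib algebra_simps Suc_diff_le intro!: sum.cong)
  ultimately show ?thesis
    by linarith
qed

lemma sum_PiE_card_binomial:
  assumes "finite A" "B \<subseteq> A"
  shows "(\<Sum>v\<in>{..<k} \<rightarrow>\<^sub>E A. G (card {i. i < k \<and> v i \<in> B}))
       = (\<Sum>j\<le>k. real (k choose j) * real (card B) ^ j * real (card A - card B) ^ (k - j) * G j)"
proof (induction k arbitrary: G)
  case (Suc k)
  have PiE_Suc: "(\<Sum>v\<in>{..<Suc k} \<rightarrow>\<^sub>E A. F v) = (\<Sum>y\<in>A. \<Sum>v\<in>{..<k} \<rightarrow>\<^sub>E A. F (v(k := y)))"
    for F :: "(nat \<Rightarrow> 'a) \<Rightarrow> real"
    by (simp add: lessThan_Suc sum_PiE_insert)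
  have card_upd: "card {i. i < Suc k \<and> (v(k := y)) i \<in> B}
      = card {i. i < k \<and> v i \<in> B} + (if y \<in> B then 1 else 0)" for v :: "nat \<Rightarrow> 'a" and y
  proof -
    have "{i. i < Suc k \<and> (v(k := y)) i \<in> B} = {i. i < k \<and> v i \<in> B} \<union> (if y \<in> B then {k} else {})"
      by (auto simp: less_Suc_eq)
    then show ?thesis
      by (auto simp: card_insert_if)
  qed
  have split: "(\<Sum>y\<in>A. G (c + (if y \<in> B then 1 else 0)))
      = real (card B) * G (Suc c) + real (card A - card B) * G c" for c
  proof -
    have "(\<Sum>y\<in>A. G (c + (if y \<in> B then 1 else 0)))
        = (\<Sum>y\<in>A - B. G (c + (if y \<in> B then 1 else 0))) + (\<Sum>y\<in>B. G (c + (if y \<in> B then 1 else 0)))"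
      by (rule sum.subset_diff[OF assms(2,1)])
    also have "\<dots> = (\<Sum>y\<in>A - B. G c) + (\<Sum>y\<in>B. G (Suc c))"
      by (intro arg_cong2[where f = "(+)"] sum.cong) auto
    finally show ?thesis
      using assms by (simp add: card_Diff_subset finite_subset)
  qed
  have "(\<Sum>v\<in>{..<Suc k} \<rightarrow>\<^sub>E A. G (card {i. i < Suc k \<and> v i \<in> B}))
      = (\<Sum>v\<in>{..<k} \<rightarrow>\<^sub>E A. real (card B) * G (Suc (card {i. i < k \<and> v i \<in> B}))
          + real (card A - card B) * G (card {i. i < k \<and> v i \<in> B}))"
    unfolding PiE_Suc card_upd split[symmetric] by (rule sum.swap)
  also have "\<dots> = (\<Sum>j\<le>k. real (k choose j) * real (card B) ^ j * real (card A - card B) ^ (k - j)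
      * (real (card B) * G (Suc j) + real (card A - card B) * G j))"
    by (rule Suc.IH[of "\<lambda>c. real (card B) * G (Suc c) + real (card A - card B) * G c"])
  also have "\<dots> = (\<Sum>j\<le>Suc k. real (Suc k choose j) * real (card B) ^ j
      * real (card A - card B) ^ (Suc k - j) * G j)"
    by (rule binomial_sum_Suc)
  finally show ?case .
qed simp

lemma sum_PiE_card_Bernstein:
  assumes "finite A" "B \<subseteq> A" "A \<noteq> {}"
  shows "(\<Sum>v\<in>{..<k} \<rightarrow>\<^sub>E A. G (card {i. i < k \<and> v i \<in> B})) / real (card A) ^ k
       = (\<Sum>j\<le>k. Bernstein k j (card B / card A) * G j)"
proof -
  define a where "a = real (card A)"
  define b where "b = real (card B)"
  have "0 < a"
    using assms by (simp add: a_def card_gt_0_iff)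
  have "real (card A - card B) = a - b"
    using assms by (simp add: a_def b_def card_mono of_nat_diff)
  have "real (k choose j) * b ^ j * (a - b) ^ (k - j) * G j / a ^ k
      = Bernstein k j (b / a) * G j" if "j \<le> k" for j
  proof -
    have "a ^ k = a ^ j * a ^ (k - j)"
      using that by (simp flip: power_add)
    moreover have "1 - b / a = (a - b) / a"
      using \<open>0 < a\<close> by (simp add: field_simps)
    ultimately show ?thesis
      using \<open>0 < a\<close> by (simp add: Bernstein_def power_divide)
  qed
  then show ?thesis
    unfolding sum_PiE_card_binomial[OF assms(1,2)] sum_divide_distrib
    using \<open>real (card A - card B) = a - b\<close> by (simp add: a_def b_def)
qed

definition path_mean :: "(nat \<Rightarrow> real) \<Rightarrow> nat \<Rightarrow> real" where
  "path_mean x n = (\<Sum>i = 1..n. x i) / real n"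

lemma path_mean_eq_card:
  assumes "1 \<le> n" "\<forall>m\<in>{1..n}. x m \<in> {-1, 1}"
  shows "path_mean x n = 2 * (card {m\<in>{1..n}. x m = 1} / n) - 1"
proof -
  have "(\<Sum>i = 1..n. x i) = (\<Sum>i = 1..n. 2 * of_bool (x i = 1) - 1)"
    using assms(2) by (intro sum.cong) auto
  also have "\<dots> = 2 * card ({1..n} \<inter> {m. x m = 1}) - real n"
    by (simp add: sum_subtractf flip: sum_distrib_left)
  also have "{1..n} \<inter> {m. x m = 1} = {m\<in>{1..n}. x m = 1}"
    by auto
  finally show ?thesis
    using assms(1) by (simp add: path_mean_def field_simps)
qed

lemma path_mean_bounds:
  assumes "\<forall>i\<in>{1..n}. x i \<in> {-1, 1}"
  shows "path_mean x n \<in> {-1..1}"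
proof -
  have "\<bar>\<Sum>i = 1..n. x i\<bar> \<le> (\<Sum>i = 1..n. \<bar>x i\<bar>)"
    by (rule sum_abs)
  also have "\<dots> = (\<Sum>i = 1..n. 1)"
  proof (intro sum.cong refl)
    fix i
    assume "i \<in> {1..n}"
    then have "x i \<in> {-1, 1}"
      using assms by blast
    then show "\<bar>x i\<bar> = 1"
      by auto
  qed
  finally show ?thesis
    by (cases "n = 0") (auto simp: path_mean_def abs_le_iff field_simps)
qed

lemma sum_Bernstein_erw_step_prob:
  assumes "s \<in> {-1, 1}"
  shows "(\<Sum>j\<le>k. Bernstein k j b * erw_step_prob p f k j s) = (1 + s * erw_H p f k (2 * b - 1)) / 2"
proof -
  have g: "(\<Sum>j\<le>k. Bernstein k j b * erw_g p f (real j / real k)) = (1 + erw_H p f k (2 * b - 1)) / 2"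
    unfolding erw_H_Bernstein by (simp add: mult.commute)
  consider "s = 1" | "s = -1"
    using assms by auto
  then show ?thesis
  proof cases
    case 1
    then show ?thesis
      using g by (simp add: erw_step_prob_def)
  next
    case 2
    then have "(\<Sum>j\<le>k. Bernstein k j b * erw_step_prob p f k j s)
        = (\<Sum>j\<le>k. Bernstein k j b) - (\<Sum>j\<le>k. Bernstein k j b * erw_g p f (real j / real k))"
      by (simp add: erw_step_prob_def right_diff_distrib sum_subtractf)
    then show ?thesis
      using g 2 by (simp add: field_simps)
  qed
qed

lemma erw_draw_average:
  assumes "1 \<le> n" and x: "x \<in> {1..n} \<rightarrow>\<^sub>E {-1, 1}" and "s \<in> {-1, 1}"
  shows "(\<Sum>v\<in>{..<k} \<rightarrow>\<^sub>E {1..n}. (1 / real n) ^ k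
            * erw_step_prob p f k (card {i. i < k \<and> x (v i) = 1}) s)
       = (1 + s * erw_H p f k (path_mean x n)) / 2"
proof -
  define B where "B = {m\<in>{1..n}. x m = 1}"
  define b where "b = card B / real n"
  have "B \<subseteq> {1..n}"
    by (auto simp: B_def)
  have "path_mean x n = 2 * b - 1"
    using path_mean_eq_card[of n x] assms(1) x by (auto simp: b_def B_def)
  have "(\<Sum>v\<in>{..<k} \<rightarrow>\<^sub>E {1..n}. (1 / real n) ^ k
            * erw_step_prob p f k (card {i. i < k \<and> x (v i) = 1}) s)
      = (\<Sum>v\<in>{..<k} \<rightarrow>\<^sub>E {1..n}. erw_step_prob p f k (card {i. i < k \<and> v i \<in> B}) s) / real n ^ k"
  proof -
    have "{i. i < k \<and> x (v i) = 1} = {i. i < k \<and> v i \<in> B}" if "v \<in> {..<k} \<rightarrow>\<^sub>E {1..n}" for v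
      using that by (auto simp: B_def PiE_iff)
    then show ?thesis
      by (simp add: power_one_over sum_divide_distrib cong: sum.cong)
  qed
  also have "\<dots> = (\<Sum>j\<le>k. Bernstein k j b * erw_step_prob p f k j s)"
    using sum_PiE_card_Bernstein[OF _ \<open>B \<subseteq> {1..n}\<close>] assms(1) by (simp add: b_def)
  also have "\<dots> = (1 + s * erw_H p f k (path_mean x n)) / 2"
    using sum_Bernstein_erw_step_prob[OF \<open>s \<in> {-1, 1}\<close>] \<open>path_mean x n = 2 * b - 1\<close> by simp
  finally show ?thesis .
qed

section \<open>The law of finite histories\<close>

locale erw_parameters =
  fixes q p :: real and f :: "real \<Rightarrow> real" and k :: nat
  assumes q_nonneg: "0 \<le> q" and q_le_one: "q \<le> 1"
    and p_pos: "0 < p" and p_less_one: "p < 1" and k_pos: "1 \<le> k"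
    and f_range: "\<forall>x\<in>{0..1}. f x \<in> {0..1}"
begin

lemma erw_g_grid_bounds:
  assumes "j \<le> k"
  shows "0 < erw_g p f (real j / real k)" "erw_g p f (real j / real k) < 1"
proof -
  have "f (real j / real k) \<in> {0..1}"
    using f_range assms k_pos by auto
  then show "0 < erw_g p f (real j / real k)" "erw_g p f (real j / real k) < 1"
    using erw_g_strict_bounds[OF p_pos p_less_one] by auto
qed

lemma erw_step_prob_nonneg:
  "0 \<le> erw_step_prob p f k (card {i. i < k \<and> P i}) s"
proof -
  have "card {i. i < k \<and> P i} \<le> k"
    using card_mono[of "{..<k}" "{i. i < k \<and> P i}"] by auto
  then show ?thesis
    using erw_g_grid_bounds by (simp add: erw_step_prob_def less_imp_le)
qed

lemma erw_H_strict_bounds: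
  assumes "y \<in> {-1..1}"
  shows "-1 < erw_H p f k y" "erw_H p f k y < 1"
proof -
  define b where "b = (1 + y) / 2"
  have "0 \<le> b" "b \<le> 1"
    using assms by (auto simp: b_def)
  have "y = 2 * b - 1"
    by (simp add: b_def field_simps)
  then have "erw_H p f k y = 2 * (\<Sum>j\<le>k. erw_g p f (real j / real k) * Bernstein k j b) - 1"
    by (simp add: erw_H_Bernstein)
  moreover have "0 < (\<Sum>j\<le>k. erw_g p f (real j / real k) * Bernstein k j b)"
    "(\<Sum>j\<le>k. erw_g p f (real j / real k) * Bernstein k j b) < 1"
    using weighted_average_strict_bounds[OF finite_atMost, of k "\<lambda>j. Bernstein k j b" 0
        "\<lambda>j. erw_g p f (real j / real k)" 1]
      \<open>0 \<le> b\<close> \<open>b \<le> 1\<close> erw_g_grid_bounds by (simp_all add: Bernstein_nonneg)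
  ultimately show "-1 < erw_H p f k y" "erw_H p f k y < 1"
    by simp_all
qed

text \<open>A history fixes X_1, ..., X_n and the draws U_1, ..., U_{n-1}, with functions extensional
  so that distinct histories describe disjoint events; \<open>history_prob\<close> is the probability
  that \<^const>\<open>erw_process\<close> assigns to it. Expectations of functionals of X_1, ..., X_n are thus
  finite sums over histories.\<close>

definition histories :: "nat \<Rightarrow> ((nat \<Rightarrow> real) \<times> (nat \<Rightarrow> nat \<Rightarrow> nat)) set" where
  "histories n = ({1..n} \<rightarrow>\<^sub>E {-1, 1}) \<times> Pi\<^sub>E {1..<n} (\<lambda>m. {..<k} \<rightarrow>\<^sub>E {1..m})"

lemma finite_histories: "finite (histories n)"
  unfolding histories_def by (intro finite_cartesian_product finite_PiE) auto

lemma histories_Suc_sum: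
  assumes "1 \<le> n"
  shows "(\<Sum>h\<in>histories (Suc n). F h) = (\<Sum>(x, u)\<in>histories n. \<Sum>v\<in>{..<k} \<rightarrow>\<^sub>E {1..n}.
           \<Sum>s\<in>{-1, 1}. F (x(Suc n := s), u(n := v)))"
proof -
  have "{1..Suc n} = insert (Suc n) {1..n}" "{1..<Suc n} = insert n {1..<n}"
    using assms by auto
  then have X: "(\<Sum>x\<in>{1..Suc n} \<rightarrow>\<^sub>E {-1, 1}. G x)
      = (\<Sum>s\<in>{-1, 1}. \<Sum>x\<in>{1..n} \<rightarrow>\<^sub>E {-1, 1}. G (x(Suc n := s)))"
    and U: "(\<Sum>u\<in>Pi\<^sub>E {1..<Suc n} D. G' u) = (\<Sum>v\<in>D n. \<Sum>u\<in>Pi\<^sub>E {1..<n} D. G' (u(n := v)))"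
    for G G' D
    by (simp_all add: sum_PiE_insert)
  have "(\<Sum>h\<in>histories (Suc n). F h) = (\<Sum>s\<in>{-1, 1}. \<Sum>x\<in>{1..n} \<rightarrow>\<^sub>E {-1, 1}.
      \<Sum>v\<in>{..<k} \<rightarrow>\<^sub>E {1..n}. \<Sum>u\<in>Pi\<^sub>E {1..<n} (\<lambda>m. {..<k} \<rightarrow>\<^sub>E {1..m}). F (x(Suc n := s), u(n := v)))"
    unfolding histories_def sum.cartesian_product' X U ..
  also have "\<dots> = (\<Sum>x\<in>{1..n} \<rightarrow>\<^sub>E {-1, 1}. \<Sum>u\<in>Pi\<^sub>E {1..<n} (\<lambda>m. {..<k} \<rightarrow>\<^sub>E {1..m}).
      \<Sum>v\<in>{..<k} \<rightarrow>\<^sub>E {1..n}. \<Sum>s\<in>{-1, 1}. F (x(Suc n := s), u(n := v)))"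
    by (simp only: sum.swap[of _ "{..<k} \<rightarrow>\<^sub>E {1..n}"]) (simp only: sum.swap[of _ "{-1, 1}"])
  also have "\<dots> = (\<Sum>(x, u)\<in>histories n. \<Sum>v\<in>{..<k} \<rightarrow>\<^sub>E {1..n}.
           \<Sum>s\<in>{-1, 1}. F (x(Suc n := s), u(n := v)))"
    unfolding histories_def by (simp only: sum.cartesian_product' prod.case)
  finally show ?thesis .
qed

definition history_prob :: "nat \<Rightarrow> (nat \<Rightarrow> real) \<Rightarrow> (nat \<Rightarrow> nat \<Rightarrow> nat) \<Rightarrow> real" where
  "history_prob n x u = (if x 1 = 1 then q else 1 - q) *
     (\<Prod>m\<in>{1..<n}. (1 / real m) ^ k * erw_step_prob p f k (card {i. i < k \<and> x (u m i) = 1}) (x (Suc m)))"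

lemma history_prob_nonneg: "0 \<le> history_prob n x u"
  unfolding history_prob_def using q_nonneg q_le_one erw_step_prob_nonneg
  by (intro mult_nonneg_nonneg prod_nonneg) auto

lemma history_prob_Suc:
  assumes "1 \<le> n" "(x, u) \<in> histories n" "v \<in> {..<k} \<rightarrow>\<^sub>E {1..n}"
  shows "history_prob (Suc n) (x(Suc n := s)) (u(n := v))
       = history_prob n x u * ((1 / real n) ^ k * erw_step_prob p f k (card {i. i < k \<and> x (v i) = 1}) s)"
proof -
  have u: "u m i \<in> {1..m}" if "m \<in> {1..<n}" "i < k" for m i
    using assms(2) that by (auto simp: histories_def PiE_iff)
  have old: "{i. i < k \<and> (x(Suc n := s)) ((u(n := v)) m i) = 1} = {i. i < k \<and> x (u m i) = 1}"
    if "m \<in> {1..<n}" for m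
  proof -
    have "u m i \<noteq> Suc n" if "i < k" for i
      using u[OF \<open>m \<in> {1..<n}\<close> that] \<open>m \<in> {1..<n}\<close> by auto
    then show ?thesis
      using that by auto
  qed
  have new: "{i. i < k \<and> (x(Suc n := s)) (v i) = 1} = {i. i < k \<and> x (v i) = 1}"
  proof -
    have "v i \<noteq> Suc n" if "i < k" for i
      using PiE_mem[OF assms(3), of i] that by auto
    then show ?thesis
      by auto
  qed
  have "(\<Prod>m\<in>{1..<n}. (1 / real m) ^ k * erw_step_prob p f k
          (card {i. i < k \<and> (x(Suc n := s)) ((u(n := v)) m i) = 1}) ((x(Suc n := s)) (Suc m)))
      = (\<Prod>m\<in>{1..<n}. (1 / real m) ^ k * erw_step_prob p f k
          (card {i. i < k \<and> x (u m i) = 1}) (x (Suc m)))"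
  proof (intro prod.cong refl)
    fix m
    assume m: "m \<in> {1..<n}"
    then show "(1 / real m) ^ k * erw_step_prob p f k
          (card {i. i < k \<and> (x(Suc n := s)) ((u(n := v)) m i) = 1}) ((x(Suc n := s)) (Suc m))
      = (1 / real m) ^ k * erw_step_prob p f k (card {i. i < k \<and> x (u m i) = 1}) (x (Suc m))"
      by (simp only: old[OF m]) simp
  qed
  moreover have "(x(Suc n := s)) 1 = x 1"
    using assms(1) by simp
  ultimately show ?thesis
    unfolding history_prob_def prod.atLeastLessThan_Suc[OF assms(1)] fun_upd_same new
    by (simp only: mult.assoc)
qed

definition path_expectation :: "nat \<Rightarrow> ((nat \<Rightarrow> real) \<Rightarrow> real) \<Rightarrow> real" where
  "path_expectation n \<Phi> = (\<Sum>(x, u)\<in>histories n. history_prob n x u * \<Phi> x)"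

lemma sum_history_prob_Suc:
  assumes "1 \<le> n" "(x, u) \<in> histories n"
  shows "(\<Sum>v\<in>{..<k} \<rightarrow>\<^sub>E {1..n}. \<Sum>s\<in>{-1, 1}.
           history_prob (Suc n) (x(Suc n := s)) (u(n := v)) * \<Phi> (x(Suc n := s)))
       = history_prob n x u * (\<Sum>s\<in>{-1, 1}.
           (1 + s * erw_H p f k (path_mean x n)) / 2 * \<Phi> (x(Suc n := s)))"
proof -
  define w where "w v s = (1 / real n) ^ k * erw_step_prob p f k (card {i. i < k \<and> x (v i) = 1}) s"
    for v s
  have x: "x \<in> {1..n} \<rightarrow>\<^sub>E {-1, 1}"
    using assms(2) by (simp add: histories_def)
  have "(\<Sum>v\<in>{..<k} \<rightarrow>\<^sub>E {1..n}. \<Sum>s\<in>{-1, 1}.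
        history_prob (Suc n) (x(Suc n := s)) (u(n := v)) * \<Phi> (x(Suc n := s)))
      = (\<Sum>v\<in>{..<k} \<rightarrow>\<^sub>E {1..n}. \<Sum>s\<in>{-1, 1}. history_prob n x u * w v s * \<Phi> (x(Suc n := s)))"
    using history_prob_Suc[OF assms] by (simp add: w_def)
  also have "\<dots> = (\<Sum>s\<in>{-1, 1}. history_prob n x u *
      ((\<Sum>v\<in>{..<k} \<rightarrow>\<^sub>E {1..n}. w v s) * \<Phi> (x(Suc n := s))))"
    by (subst sum.swap) (simp add: sum_distrib_left sum_distrib_right mult.assoc)
  also have "\<dots> = (\<Sum>s\<in>{-1, 1}. history_prob n x u *
      ((1 + s * erw_H p f k (path_mean x n)) / 2 * \<Phi> (x(Suc n := s))))"
  proof (intro sum.cong refl)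
    fix s :: real
    assume "s \<in> {-1, 1}"
    then show "history_prob n x u * ((\<Sum>v\<in>{..<k} \<rightarrow>\<^sub>E {1..n}. w v s) * \<Phi> (x(Suc n := s)))
        = history_prob n x u * ((1 + s * erw_H p f k (path_mean x n)) / 2 * \<Phi> (x(Suc n := s)))"
      using erw_draw_average[OF assms(1) x] by (simp add: w_def)
  qed
  also have "\<dots> = history_prob n x u * (\<Sum>s\<in>{-1, 1}.
        (1 + s * erw_H p f k (path_mean x n)) / 2 * \<Phi> (x(Suc n := s)))"
    by (rule sum_distrib_left[symmetric])
  finally show ?thesis .
qed

lemma path_expectation_Suc:
  assumes "1 \<le> n"
  shows "path_expectation (Suc n) \<Phi> = path_expectation n (\<lambda>x. \<Sum>s\<in>{-1, 1}.
           (1 + s * erw_H p f k (path_mean x n)) / 2 * \<Phi> (x(Suc n := s)))"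
  unfolding path_expectation_def histories_Suc_sum[OF assms]
  by (intro sum.cong refl) (auto simp only: split_paired_all prod.case sum_history_prob_Suc[OF assms])

lemma path_expectation_const:
  assumes "1 \<le> n"
  shows "path_expectation n (\<lambda>_. c) = c"
  using assms
proof (induction n rule: nat_induct_at_least)
  case base
  show ?case
    by (simp add: path_expectation_def histories_def history_prob_def sum.cartesian_product'
        sum_PiE_insert algebra_simps)
next
  case (Suc n)
  have "(\<Sum>s\<in>{-1, 1}. (1 + s * h) / 2 * c) = c" for h :: real
    by (simp add: field_simps)
  then show ?case
    unfolding path_expectation_Suc[OF Suc.hyps] using Suc.IH by simp
qed

lemma path_expectation_mono:
  assumes "\<And>x u. (x, u) \<in> histories n \<Longrightarrow> \<Phi> x \<le> \<Psi> x"
  shows "path_expectation n \<Phi> \<le> path_expectation n \<Psi>"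
  unfolding path_expectation_def using assms
  by (intro sum_mono) (auto intro: mult_left_mono history_prob_nonneg)

lemma path_expectation_add_const:
  assumes "1 \<le> n"
  shows "path_expectation n (\<lambda>x. \<Phi> x + c) = path_expectation n \<Phi> + c"
proof -
  have "path_expectation n (\<lambda>x. \<Phi> x + c) = path_expectation n \<Phi> + path_expectation n (\<lambda>_. c)"
    unfolding path_expectation_def by (simp add: distrib_left sum.distrib case_prod_unfold)
  then show ?thesis
    using path_expectation_const[OF assms] by simp
qed

definition martingale :: "(nat \<Rightarrow> real) \<Rightarrow> nat \<Rightarrow> real" where
  "martingale x n = (\<Sum>m\<in>{1..<n}. x (Suc m) - erw_H p f k (path_mean x m))"

lemma martingale_Suc:
  "1 \<le> n \<Longrightarrow> martingale x (Suc n) = martingale x n + (x (Suc n) - erw_H p f k (path_mean x n))"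
  by (simp add: martingale_def)

lemma martingale_cong:
  assumes "\<And>m. m \<in> {1..n} \<Longrightarrow> x m = x' m"
  shows "martingale x n = martingale x' n"
proof -
  have "path_mean x m = path_mean x' m" if "m < n" for m
    unfolding path_mean_def using assms that by (intro arg_cong[where f = "\<lambda>t. t / _"] sum.cong) auto
  then show ?thesis
    unfolding martingale_def using assms by (intro sum.cong) auto
qed

lemma martingale_upd_Suc:
  assumes "1 \<le> n"
  shows "martingale (x(Suc n := s)) (Suc n) = martingale x n + (s - erw_H p f k (path_mean x n))"
proof -
  have "path_mean (x(Suc n := s)) n = path_mean x n" "martingale (x(Suc n := s)) n = martingale x n"
    unfolding path_mean_def by (auto intro!: sum.cong martingale_cong)
  then show ?thesis
    using martingale_Suc[OF assms, of "x(Suc n := s)"] by simp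
qed

lemma martingale_increment_bound:
  assumes x: "\<forall>n\<ge>1. x n \<in> {-1, 1}" and "1 \<le> n"
  shows "\<bar>martingale x (Suc n) - martingale x n\<bar> \<le> 2"
proof -
  have "path_mean x n \<in> {-1..1}"
    using x by (intro path_mean_bounds) auto
  then have "\<bar>erw_H p f k (path_mean x n)\<bar> \<le> 1"
    using erw_H_strict_bounds by (simp add: abs_le_iff less_imp_le)
  moreover have "x (Suc n) \<in> {-1, 1}"
    using x by simp
  ultimately show ?thesis
    unfolding martingale_Suc[OF \<open>1 \<le> n\<close>] by (auto simp: abs_le_iff)
qed

lemma path_expectation_martingale_sq:
  assumes "1 \<le> n"
  shows "path_expectation n (\<lambda>x. (martingale x n)\<^sup>2) \<le> real n - 1"
  using assms
proof (induction n rule: nat_induct_at_least)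
  case base
  show ?case
    using path_expectation_const[of 1 0] by (simp add: martingale_def)
next
  case (Suc n)
  have two_point: "(\<Sum>s\<in>{-1, 1}. (1 + s * h) / 2 * (M + (s - h))\<^sup>2) = M\<^sup>2 + (1 - h\<^sup>2)"
    for M h :: real
    by (simp add: power2_eq_square field_simps)
  have "path_expectation (Suc n) (\<lambda>x. (martingale x (Suc n))\<^sup>2)
      = path_expectation n (\<lambda>x. (martingale x n)\<^sup>2 + (1 - (erw_H p f k (path_mean x n))\<^sup>2))"
    unfolding path_expectation_Suc[OF Suc.hyps] martingale_upd_Suc[OF Suc.hyps] two_point ..
  also have "\<dots> \<le> path_expectation n (\<lambda>x. (martingale x n)\<^sup>2 + 1)"
    by (intro path_expectation_mono) simp
  also have "\<dots> \<le> real (Suc n) - 1"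
    using Suc.IH path_expectation_add_const[OF Suc.hyps] by simp
  finally show ?case .
qed

lemma path_mean_tendsto_unique_fixed_point:
  assumes x: "\<forall>n\<ge>1. x n \<in> {-1, 1}"
    and sparse: "eventually (\<lambda>j. \<bar>martingale x (Suc j ^ 4)\<bar> \<le> real (Suc j ^ 3)) sequentially"
    and unique: "\<forall>y\<in>{-1..1}. erw_H p f k y = y \<longrightarrow> y = xs"
  shows "path_mean x \<longlonglongrightarrow> xs"
proof -
  have mean: "path_mean x n \<in> {-1..1}" for n
    using x by (intro path_mean_bounds) auto
  have H: "\<forall>w\<in>{-1..1}. \<bar>erw_H p f k w\<bar> \<le> 1"
    using erw_H_strict_bounds by (auto simp: abs_le_iff less_imp_le)
  have "(\<lambda>n. martingale x n / n) \<longlonglongrightarrow> 0"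
    using sparse martingale_increment_bound[OF x]
    by (intro LIMSEQ_div_of_sparse_fourth_power_bound[of _ 2]) auto
  define z where "z n = path_mean x n - martingale x n / n" for n
  have nz: "real n * z n = (\<Sum>i = 1..n. x i) - martingale x n" if "1 \<le> n" for n
    using that by (simp add: z_def path_mean_def field_simps)
  have rec: "\<forall>n\<ge>1. z (Suc n) = z n + (erw_H p f k (path_mean x n) - z n) / Suc n"
  proof (intro allI impI)
    fix n :: nat
    assume "1 \<le> n"
    have "real (Suc n) * z (Suc n) = real n * z n + erw_H p f k (path_mean x n)"
      using nz[OF \<open>1 \<le> n\<close>] nz[of "Suc n"] martingale_Suc[OF \<open>1 \<le> n\<close>] by simp
    then show "z (Suc n) = z n + (erw_H p f k (path_mean x n) - z n) / Suc n"
      by (simp add: field_simps)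
  qed
  have close: "(\<lambda>n. path_mean x n - z n) \<longlonglongrightarrow> 0"
    unfolding z_def using \<open>(\<lambda>n. martingale x n / n) \<longlonglongrightarrow> 0\<close> by simp
  have cont: "continuous_on {-1..1} (erw_H p f k)"
    by (rule continuous_on_erw_H)
  have "erw_H p f k 1 < 1" "-1 < erw_H p f k (-1)"
    using erw_H_strict_bounds by auto
  then have "\<forall>w\<in>{-1..1}. xs < w \<longrightarrow> erw_H p f k w < w" "\<forall>w\<in>{-1..1}. w < xs \<longrightarrow> w < erw_H p f k w"
    using less_self_above_unique_fixed_point[OF cont _ unique]
      greater_self_below_unique_fixed_point[OF cont _ unique] by blast+
  then show ?thesis
    using averaging_tendsto[OF cont H _ _ _ rec close] mean by blast
qed

end

section \<open>Almost sure convergence\<close>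

locale erw_walk = erw_parameters q p f k for q p f k +
  fixes M :: "'a measure" and X :: "nat \<Rightarrow> 'a \<Rightarrow> real" and U :: "nat \<Rightarrow> nat \<Rightarrow> 'a \<Rightarrow> nat"
  assumes prob_space_M: "prob_space M" and process: "erw_process M q p f k X U"
begin

sublocale M: prob_space M
  by (rule prob_space_M)

definition history_event :: "nat \<Rightarrow> (nat \<Rightarrow> real) \<Rightarrow> (nat \<Rightarrow> nat \<Rightarrow> nat) \<Rightarrow> 'a set" where
  "history_event n x u =
     {\<omega> \<in> space M. (\<forall>m\<in>{1..n}. X m \<omega> = x m) \<and> (\<forall>m\<in>{1..<n}. \<forall>i<k. U m i \<omega> = u m i)}"

lemma history_event_path:
  assumes "(x, u) \<in> histories n" "\<omega> \<in> history_event n x u" "m \<in> {1..n}"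
  shows "X m \<omega> = x m \<and> x m \<in> {-1, 1}"
proof
  show "X m \<omega> = x m"
    using assms(2,3) unfolding history_event_def by blast
  have "x \<in> {1..n} \<rightarrow>\<^sub>E {-1, 1}"
    using assms(1) by (simp add: histories_def)
  then show "x m \<in> {-1, 1}"
    using assms(3) by (rule PiE_mem)
qed

lemma sets_history_event: "history_event n x u \<in> sets M"
proof -
  have [measurable]: "X m \<in> M \<rightarrow>\<^sub>M count_space UNIV" "U m i \<in> M \<rightarrow>\<^sub>M count_space UNIV" for m i
    using process by (auto simp: erw_process_def)
  show ?thesis
    unfolding history_event_def by measurable
qed

lemma measure_history_event:
  assumes "1 \<le> n" "(x, u) \<in> histories n"
  shows "measure M (history_event n x u) = history_prob n x u"
proof -
  have "\<forall>m\<in>{1..n}. x m \<in> {-1, 1}" "\<forall>m\<in>{1..<n}. \<forall>i<k. u m i \<in> {1..m}"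
    using assms(2) by (auto simp: histories_def PiE_iff)
  then show ?thesis
    using process assms(1) unfolding erw_process_def history_event_def history_prob_def by blast
qed

lemma history_events_disjoint: "disjoint_family_on (\<lambda>(x, u). history_event n x u) (histories n)"
  unfolding disjoint_family_on_def
proof (intro ballI impI equals0I)
  fix h h' \<omega>
  assume h: "h \<in> histories n" "h' \<in> histories n" "h \<noteq> h'"
    and \<omega>: "\<omega> \<in> (case h of (x, u) \<Rightarrow> history_event n x u) \<inter> (case h' of (x, u) \<Rightarrow> history_event n x u)"
  obtain x u x' u' where hx: "h = (x, u)" "h' = (x', u')"
    by (cases h, cases h')
  have "x = x'"
    using h(1,2) \<omega> unfolding hx
    by (intro extensionalityI[of _ "{1..n}"]) (auto simp: histories_def history_event_def PiE_iff)
  moreover have "u = u'"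
  proof (rule extensionalityI[of _ "{1..<n}"])
    show "u \<in> extensional {1..<n}" "u' \<in> extensional {1..<n}"
      using h(1,2) unfolding hx by (auto simp: histories_def PiE_iff)
    fix m
    assume "m \<in> {1..<n}"
    then show "u m = u' m"
      using h(1,2) \<omega> unfolding hx
      by (intro extensionalityI[of _ "{..<k}"]) (auto simp: histories_def history_event_def PiE_iff)
  qed
  ultimately show False
    using h(3) hx by simp
qed

lemma measure_history_events:
  assumes "1 \<le> n"
  shows "measure M (\<Union>(x, u)\<in>{h\<in>histories n. P (fst h)}. history_event n x u)
       = path_expectation n (\<lambda>x. of_bool (P x))"
proof -
  have "measure M (\<Union>(x, u)\<in>{h\<in>histories n. P (fst h)}. history_event n x u)
      = (\<Sum>h\<in>{h\<in>histories n. P (fst h)}. measure M (case h of (x, u) \<Rightarrow> history_event n x u))"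
    by (rule measure_finite_Union)
       (auto simp: finite_histories sets_history_event
          intro: disjoint_family_on_mono[OF _ history_events_disjoint])
  also have "\<dots> = (\<Sum>(x, u)\<in>histories n. history_prob n x u * of_bool (P x))"
    unfolding sum.inter_filter[OF finite_histories]
    by (intro sum.cong refl) (auto simp: measure_history_event[OF assms])
  finally show ?thesis
    unfolding path_expectation_def .
qed

lemma AE_history_event: "AE \<omega> in M. \<forall>n\<ge>1. \<exists>(x, u)\<in>histories n. \<omega> \<in> history_event n x u"
proof -
  have "AE \<omega> in M. 1 \<le> n \<longrightarrow> (\<exists>(x, u)\<in>histories n. \<omega> \<in> history_event n x u)" for n
  proof (cases "1 \<le> n")
    case True
    have "measure M (\<Union>(x, u)\<in>{h\<in>histories n. True}. history_event n x u) = 1"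
      using measure_history_events[OF True, of "\<lambda>_. True"] path_expectation_const[OF True] by simp
    then show ?thesis
      by (auto dest!: M.AE_prob_1)
  qed simp
  then show ?thesis
    by (simp add: AE_all_countable)
qed

lemma measure_abs_martingale_gt_le:
  assumes "1 \<le> N" "0 < t"
  shows "measure M (\<Union>(x, u)\<in>{h\<in>histories N. t < \<bar>martingale (fst h) N\<bar>}. history_event N x u)
       \<le> (real N - 1) / t\<^sup>2"
proof -
  have "of_bool (t < \<bar>martingale x N\<bar>) \<le> (martingale x N)\<^sup>2 / t\<^sup>2" for x
  proof (cases "t < \<bar>martingale x N\<bar>")
    case True
    then have "t\<^sup>2 \<le> (martingale x N)\<^sup>2"
      using \<open>0 < t\<close> by (metis abs_le_square_iff abs_of_pos less_imp_le)
    then show ?thesis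
      using True \<open>0 < t\<close> by simp
  qed simp
  then have "path_expectation N (\<lambda>x. of_bool (t < \<bar>martingale x N\<bar>))
      \<le> path_expectation N (\<lambda>x. (martingale x N)\<^sup>2 / t\<^sup>2)"
    by (intro path_expectation_mono)
  also have "\<dots> = path_expectation N (\<lambda>x. (martingale x N)\<^sup>2) / t\<^sup>2"
    unfolding path_expectation_def by (simp add: sum_divide_distrib case_prod_unfold)
  also have "\<dots> \<le> (real N - 1) / t\<^sup>2"
    using path_expectation_martingale_sq[OF assms(1)] by (simp add: divide_right_mono)
  finally show ?thesis
    using measure_history_events[OF assms(1), of "\<lambda>x. t < \<bar>martingale x N\<bar>"] by simp
qed

definition martingale_exceeds :: "nat \<Rightarrow> 'a set" where
  "martingale_exceeds j = (\<Union>(x, u)\<in>{h\<in>histories (Suc j ^ 4).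
      real (Suc j ^ 3) < \<bar>martingale (fst h) (Suc j ^ 4)\<bar>}. history_event (Suc j ^ 4) x u)"

lemma AE_eventually_not_martingale_exceeds:
  "AE \<omega> in M. eventually (\<lambda>j. \<omega> \<notin> martingale_exceeds j) sequentially"
proof -
  have sets: "martingale_exceeds j \<in> sets M" for j
    unfolding martingale_exceeds_def using finite_histories
    by (intro sets.finite_UN) (auto simp: sets_history_event)
  have bound: "measure M (martingale_exceeds j) \<le> 1 / real (Suc j) ^ 2" for j
  proof -
    have "measure M (martingale_exceeds j) \<le> (real (Suc j ^ 4) - 1) / (real (Suc j ^ 3))\<^sup>2"
      unfolding martingale_exceeds_def by (rule measure_abs_martingale_gt_le) auto
    also have "\<dots> \<le> real (Suc j ^ 4) / (real (Suc j ^ 3))\<^sup>2"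
      by (intro divide_right_mono) auto
    also have "\<dots> = 1 / real (Suc j) ^ 2"
      by (simp add: field_simps flip: power_mult power_add)
    finally show ?thesis .
  qed
  have "summable (\<lambda>j. 1 / real (Suc j) ^ 2)"
    using summable_Suc_iff[THEN iffD2, OF inverse_power_summable[of 2, where 'a = real]]
    by (simp add: inverse_eq_divide)
  then have "summable (\<lambda>j. measure M (martingale_exceeds j))"
    by (rule summable_comparison_test'[where N = 0]) (use bound in simp)
  then have "AE \<omega> in M. eventually (\<lambda>j. \<omega> \<in> space M - martingale_exceeds j) sequentially"
    using sets by (intro borel_cantelli_AE1) (auto simp: M.emeasure_finite less_top[symmetric])
  then show ?thesis
    by (auto elim: eventually_mono)
qed

lemma AE_path:
  "AE \<omega> in M. (\<forall>n\<ge>1. X n \<omega> \<in> {-1, 1}) \<and>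
     eventually (\<lambda>j. \<bar>martingale (\<lambda>m. X m \<omega>) (Suc j ^ 4)\<bar> \<le> real (Suc j ^ 3)) sequentially"
  using AE_eventually_not_martingale_exceeds AE_history_event
proof eventually_elim
  case (elim \<omega>)
  have "X n \<omega> \<in> {-1, 1}" if "1 \<le> n" for n
  proof -
    obtain x u where "(x, u) \<in> histories n" "\<omega> \<in> history_event n x u"
      using elim(2) \<open>1 \<le> n\<close> by blast
    then show ?thesis
      using history_event_path[of x u n \<omega> n] \<open>1 \<le> n\<close> by simp
  qed
  moreover have "eventually (\<lambda>j. \<bar>martingale (\<lambda>m. X m \<omega>) (Suc j ^ 4)\<bar> \<le> real (Suc j ^ 3)) sequentially"
    using elim(1)
  proof eventually_elim
    case (elim j)
    have "1 \<le> Suc j ^ 4"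
      by simp
    then obtain x u where xu: "(x, u) \<in> histories (Suc j ^ 4)" "\<omega> \<in> history_event (Suc j ^ 4) x u"
      using \<open>\<forall>n\<ge>1. \<exists>(x, u)\<in>histories n. \<omega> \<in> history_event n x u\<close> by blast
    then have "martingale (\<lambda>m. X m \<omega>) (Suc j ^ 4) = martingale x (Suc j ^ 4)"
      using history_event_path by (intro martingale_cong) blast
    moreover have "\<omega> \<in> martingale_exceeds j" if "real (Suc j ^ 3) < \<bar>martingale x (Suc j ^ 4)\<bar>"
      unfolding martingale_exceeds_def using xu that by (intro UN_I[of "(x, u)"]) auto
    ultimately show ?case
      using elim by force
  qed
  ultimately show ?case
    by blast
qed

theorem AE_tendsto_unique_fixed_point:
  assumes "\<forall>y\<in>{-1..1}. erw_H p f k y = y \<longrightarrow> y = xs"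
  shows "AE \<omega> in M. (\<lambda>n. erw_S X n \<omega> / real n) \<longlonglongrightarrow> xs"
  using AE_path
proof eventually_elim
  case (elim \<omega>)
  then have "path_mean (\<lambda>m. X m \<omega>) \<longlonglongrightarrow> xs"
    by (intro path_mean_tendsto_unique_fixed_point[OF _ _ assms]) auto
  moreover have "(\<lambda>n. erw_S X n \<omega> / real n) = path_mean (\<lambda>m. X m \<omega>)"
    by (simp add: fun_eq_iff erw_S_def path_mean_def)
  ultimately show ?case
    by simp
qed

end

theorem theorem4p1:
  fixes M :: "'a measure" and q p :: real and k :: nat and f :: "real \<Rightarrow> real"
    and X :: "nat \<Rightarrow> 'a \<Rightarrow> real" and U :: "nat \<Rightarrow> nat \<Rightarrow> 'a \<Rightarrow> nat"
  assumes "prob_space M"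
    and "0 \<le> q" "q \<le> 1"
    and "0 < p" "p < 1" "p \<noteq> 1 / 2"
    and "k \<ge> 1"
    and "\<forall>x \<in> {0..1}. f x \<in> {0..1}"
    and "erw_process M q p f k X U"
    and A: "(p > 1 / 2 \<and> f 1 < p / (2 * p - 1)) \<or> (p < 1 / 2 \<and> f 0 < (1 - p) / (1 - 2 * p))"
  shows "(\<forall>xs. xs \<in> {-1..1} \<and> erw_H p f k xs = xs \<and>
              (\<forall>y \<in> {-1..1}. erw_H p f k y = y \<longrightarrow> y = xs) \<longrightarrow>
            (AE \<omega> in M. (\<lambda>n. erw_S X n \<omega> / real n) \<longlonglongrightarrow> xs))
    \<and> ((\<forall>x \<in> {-1<..<1}. \<forall>y \<in> {-1<..<1}. x < y \<longrightarrow> erw_H p f k y < erw_H p f k x)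
        \<or> strictly_convex_on {-1<..<1} (erw_H p f k)
        \<or> strictly_concave_on {-1<..<1} (erw_H p f k)
        \<or> (\<exists>c. 0 \<le> c \<and> c < 1 \<and> (\<forall>x \<in> {-1<..<1}. \<forall>y \<in> {-1<..<1}.
              \<bar>erw_H p f k x - erw_H p f k y\<bar> \<le> c * \<bar>x - y\<bar>))
       \<longrightarrow> (\<exists>xs \<in> {-1<..<1}. erw_H p f k xs = xs \<and>
              (\<forall>y \<in> {-1..1}. erw_H p f k y = y \<longrightarrow> y = xs) \<and>
              (AE \<omega> in M. (\<lambda>n. erw_S X n \<omega> / real n) \<longlonglongrightarrow> xs)))"
proof -
  have "erw_walk q p f k M X U"
    unfolding erw_walk_def erw_walk_axioms_def erw_parameters_def using assms(1-5,7-9) by auto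
  then interpret erw_walk q p f k M X U .
  have ends: "erw_H p f k 1 < 1" "-1 < erw_H p f k (-1)"
    using erw_H_strict_bounds by auto
  show ?thesis (is "_ \<and> (?shape \<longrightarrow> ?conclusion)")
  proof (intro conjI allI impI)
    fix xs
    assume "xs \<in> {-1..1} \<and> erw_H p f k xs = xs \<and> (\<forall>y\<in>{-1..1}. erw_H p f k y = y \<longrightarrow> y = xs)"
    then show "AE \<omega> in M. (\<lambda>n. erw_S X n \<omega> / real n) \<longlonglongrightarrow> xs"
      by (intro AE_tendsto_unique_fixed_point) blast
  next
    assume ?shape
    then obtain xs where "xs \<in> {-1<..<1}" "erw_H p f k xs = xs"
      and unique: "\<forall>y\<in>{-1..1}. erw_H p f k y = y \<longrightarrow> y = xs"
      using unique_fixed_point[OF continuous_on_erw_H ends] by blast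
    then show ?conclusion
      using AE_tendsto_unique_fixed_point[OF unique] by blast
  qed
qed

end
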